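(* Let $M, K \ge 1$ be integers, let $(\mathcal{U}, (\cdot,\cdot)_{\mathcal{U}})$ be a real Hilbert space with norm $\|\cdot\|_{\mathcal{U}}$, and let $\mathcal{P} \subset \mathbb{R}^{p}$ be a compact set of hyper-parameters. For every $\theta \in \mathcal{P}$ let $a_\theta : \mathcal{U}\times\mathcal{U} \to \mathbb{R}$ be a bounded, coercive bilinear form and $b_\theta : \mathbb{R}^M \times \mathcal{U} \to \mathbb{R}$ a non-trivial (not identically zero) bounded bilinear form, and for $m \in \mathbb{R}^M$ let $u_\theta(m) \in \mathcal{U}$ be the unique solution of $a_\theta(u_\theta(m), \psi) = b_\theta(m,\psi)$ for all $\psi \in \mathcal{U}$. Let $\Sigma_0 \in \mathbb{R}^{M\times M}$ be symmetric positive definite, with $\|m\|_{\Sigma_0^{-1}}^2 := m^T \Sigma_0^{-1} m$, and let $C_{\Sigma_0^{-1}} := \sup_{m \ne 0} \|m\|_2/\|m\|_{\Sigma_0^{-1}}$, where $\|\cdot\|_2$ is the Euclidean norm. Let $L = (l_1,\dots,l_K)^T : \mathcal{U} \to \mathbb{R}^K$ with each $l_k$ a bounded linear functional on $\mathcal{U}$, let $\Sigma_L \in \mathbb{R}^{K\times K}$ be symmetric positive definite with $\|d\|_{\Sigma_L^{-1}}^2 := d^T\Sigma_L^{-1} d$, and let $\sigma > 0$. Fix $\theta \in \mathcal{P}$. Let $G_{\theta,L} \in \mathbb{R}^{K \times M}$ be the matrix of the linear map $m \mapsto L u_\theta(m)$, and define the posterior covariance $$\Sigma_{\mathrm{post}}^{\theta,L}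 := \Big(\tfrac{1}{\sigma^2} G_{\theta,L}^T \Sigma_L^{-1} G_{\theta,L} + \Sigma_0^{-1}\Big)^{-1}.$$ Let $X_\theta := \{m \in \mathbb{R}^M : u_\theta(m) = 0\}$, let $X_\theta^\perp$ be its orthogonal complement in the Euclidean inner product, and let $\Pi$ be the Euclidean orthogonal projection onto $X_\theta^\perp$. Define $$\eta_{\inf} := \inf_{0\neq m \in X_\theta^\perp} \frac{\|u_\theta(m)\|_{\mathcal{U}}}{\|m\|_{\Sigma_0^{-1}}}, \qquad \beta_{\theta,L} := \inf\{\|L u_\theta(m)\|_{\Sigma_L^{-1}} : m \in \mathbb{R}^M,\ \|u_\theta(m)\|_{\mathcal{U}} = 1\}.$$ Let $0 < \lambda_1 \le \dots \le \lambda_M$ be the eigenvalues of $\Sigma_{\mathrm{post}}^{\theta,L}$ (with multiplicity) and $(m_{\lambda_i})_{i=1}^M$ a Euclidean-orthonormal basis of $\mathbb{R}^M$ with $\Sigma_{\mathrm{post}}^{\theta,L} m_{\lambda_i} = \lambda_i m_{\lambda_i}$. Then for each $i = 1,\dots,M$, $$\lambda_i \le \frac{C_{\Sigma_0^{-1}}^2}{\frac{1}{\sigma^2}\beta_{\theta,L}^2\, \eta_{\inf}^2\, \|\Pi m_{\lambda_i}\|_2^2 + 1},$$ and consequently $$\operatorname{trace}(\Sigma_{\mathrm{post}}^{\theta,L}) \le C_{\Sigma_0^{-1}}^2 \sum_{i=1}^M \Big(\tfrac{1}{\sigma^2}\beta_{\theta,L}^2\, \eta_{\inf}^2\, \|\Pi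 m_{\lambda_i}\|_2^2 + 1\Big)^{-1}.$$
   Context: This is the setting of a hyper-parameterized linear Bayesian inverse problem: prior $\mathcal{N}(m_0,\Sigma_0)$ on the parameter $m\in\mathbb{R}^M$, data $d = L u_\theta(m) + \eta$ with noise $\eta \sim \mathcal{N}(0,\sigma^2\Sigma_L)$; $\Sigma_{\mathrm{post}}^{\theta,L}$ is the covariance of the resulting Gaussian posterior. $\beta_{\theta,L}$ is called the observability coefficient. Since $b_\theta$ is non-trivial, $X_\theta^\perp \ne \{0\}$ and $\eta_{\inf} > 0$. *)

theory Defs
  imports "HOL-Analysis.Analysis"
begin

definition spd :: "real^'n^'n \<Rightarrow> bool" where
  "spd S \<longleftrightarrow> transpose S = S \<and> (\<forall>x. x \<noteq> 0 \<longrightarrow> x \<bullet> (S *v x) > 0)"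

definition inv_norm :: "real^'n^'n \<Rightarrow> real^'n \<Rightarrow> real" where
  "inv_norm S x = sqrt (x \<bullet> (matrix_inv S *v x))"

definition bounded_bilinear_form :: "('a::real_normed_vector \<Rightarrow> 'b::real_normed_vector \<Rightarrow> real) \<Rightarrow> bool" where
  "bounded_bilinear_form f \<longleftrightarrow> bilinear f \<and> (\<exists>C. \<forall>x y. \<bar>f x y\<bar> \<le> C * norm x * norm y)"

definition coercive_form :: "('a::real_normed_vector \<Rightarrow> 'a \<Rightarrow> real) \<Rightarrow> bool" where
  "coercive_form f \<longleftrightarrow> (\<exists>\<alpha>>0. \<forall>x. f x x \<ge> \<alpha> * (norm x)\<^sup>2)"

definition obs :: "('k \<Rightarrow> 'u \<Rightarrow> real) \<Rightarrow> 'u \<Rightarrow> real^'k" where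
  "obs l v = (\<chi> k. l k v)"

end

theory Submission
  imports Defs
begin

(* With the precision matrix A = sigma^-2 G^T SigmaL^-1 G + Sigma0^-1, whose inverse is Sigma_post,
   a unit eigenvector m of Sigma_post with eigenvalue lambda satisfies
     1 / lambda = m . A m = sigma^-2 |G m|^2_{SigmaL^-1} + |m|^2_{Sigma0^-1},
   and the last term is at least 1 / C^2 by the definition of C. Since u_theta vanishes on X,
   u_theta m = u_theta (Pi m) with Pi m orthogonal to X, so the definitions of eta_inf, C and beta give
     beta eta_inf |Pi m| <= C beta |u_theta m| <= C |G m|_{SigmaL^-1}.
   Together these bound lambda, and summing over the orthonormal eigenbasis bounds the trace. *)

lemma matrix_inv_right:
  fixes A :: "'a::field^'n^'n"
  assumes "invertible A"
  shows "A ** matrix_inv A = mat 1"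
proof -
  have "\<exists>A'. A ** A' = mat 1 \<and> A' ** A = mat 1"
    using assms unfolding invertible_def .
  then show ?thesis
    unfolding matrix_inv_def by (rule someI2_ex) blast
qed

lemma pos_definite_invertible:
  fixes S :: "real^'n^'n"
  assumes pd: "\<And>x. x \<noteq> 0 \<Longrightarrow> 0 < x \<bullet> (S *v x)"
  shows "invertible S"
proof -
  have "inj ((*v) S)"
  proof (rule injI)
    fix x y
    assume "S *v x = S *v y"
    then have "(x - y) \<bullet> (S *v (x - y)) = 0"
      by (simp add: matrix_vector_mult_diff_distrib)
    then show "x = y"
      using pd[of "x - y"] by auto
  qed
  then show ?thesis
    using invertible_left_inverse matrix_left_invertible_injective by blast
qed

lemma pos_definite_quadratic_form_ge:
  fixes Q :: "real^'n^'n"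
  assumes pd: "\<And>x. x \<noteq> 0 \<Longrightarrow> 0 < x \<bullet> (Q *v x)"
  obtains \<mu> where "0 < \<mu>" "\<And>x. \<mu> * (norm x)\<^sup>2 \<le> x \<bullet> (Q *v x)"
proof -
  let ?q = "\<lambda>x. x \<bullet> (Q *v x)"
  have "continuous_on (sphere 0 1) ?q"
    by (intro continuous_intros linear_continuous_on matrix_vector_mul_bounded_linear)
  moreover have "sphere (0::real^'n) 1 \<noteq> {}"
    by simp
  ultimately obtain x0 where x0: "x0 \<in> sphere 0 1" "\<And>y. y \<in> sphere 0 1 \<Longrightarrow> ?q x0 \<le> ?q y"
    using continuous_attains_inf[OF compact_sphere] by blast
  have "?q x0 * (norm x)\<^sup>2 \<le> ?q x" for x
  proof (cases "x = 0")
    case False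
    have "?q x0 \<le> ?q ((1 / norm x) *\<^sub>R x)"
      using False by (intro x0(2)) simp
    also have "\<dots> = ?q x / (norm x)\<^sup>2"
      by (simp add: matrix_vector_mult_scaleR power2_eq_square)
    finally show ?thesis
      using False by (simp add: le_divide_eq)
  qed simp
  moreover have "x0 \<noteq> 0"
    using x0(1) by auto
  ultimately show ?thesis
    using that pd by blast
qed

lemma inverse_eigenpair_quadratic_form:
  fixes A :: "real^'n^'n"
  assumes "invertible A" "matrix_inv A *v v = c *\<^sub>R v" "v \<bullet> v = 1"
  shows "c * (v \<bullet> (A *v v)) = 1"
proof -
  have "v = A *v (matrix_inv A *v v)"
    using matrix_inv_right[OF assms(1)] by (simp add: matrix_vector_mul_assoc)
  also have "\<dots> = c *\<^sub>R (A *v v)"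
    using assms(2) by (simp add: matrix_vector_mult_scaleR)
  finally have "v \<bullet> v = c * (v \<bullet> (A *v v))"
    by (metis inner_scaleR_right)
  then show ?thesis
    using assms(3) by simp
qed

lemma trace_eq_sum_orthonormal:
  fixes Q :: "real^'n^'n" and v :: "nat \<Rightarrow> real^'n"
  assumes orthonormal: "\<And>i j. i \<in> {1..CARD('n)} \<Longrightarrow> j \<in> {1..CARD('n)} \<Longrightarrow>
      v i \<bullet> v j = (if i = j then 1 else 0)"
  shows "trace Q = (\<Sum>i=1..CARD('n). v i \<bullet> (Q *v v i))"
proof -
  obtain g :: "'n \<Rightarrow> nat" where g: "bij_betw g UNIV {1..CARD('n)}"
    using finite_same_card_bij[of "UNIV::'n set" "{1..CARD('n)}"] by auto
  have g_in: "g j \<in> {1..CARD('n)}" for j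
    using g by (auto simp: bij_betw_def)
  have "inj g"
    using g by (simp add: bij_betw_def)
  define B :: "real^'n^'n" where "B = (\<chi> j. v (g j))"
  have "(B ** transpose B) $ j $ k = mat 1 $ j $ k" for j k
  proof -
    have "(B ** transpose B) $ j $ k = v (g j) \<bullet> v (g k)"
      by (simp add: matrix_matrix_mult_def B_def transpose_def inner_vec_def)
    then show ?thesis
      using orthonormal[OF g_in g_in] \<open>inj g\<close> by (simp add: mat_def inj_eq)
  qed
  then have "transpose B ** B = mat 1"
    using matrix_left_right_inverse by (metis vec_eq_iff)
  then have "trace Q = trace (B ** Q ** transpose B)"
    by (metis matrix_mul_assoc matrix_mul_rid trace_mul_sym)
  also have "\<dots> = (\<Sum>j\<in>UNIV. v (g j) \<bullet> (Q *v v (g j)))"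
    unfolding trace_def
    by (simp add: matrix_matrix_mult_def B_def transpose_def inner_vec_def matrix_vector_mult_def
        sum_distrib_left sum_distrib_right ac_simps) (subst sum.swap, simp add: ac_simps)
  also have "\<dots> = (\<Sum>i=1..CARD('n). v i \<bullet> (Q *v v i))"
    using sum.reindex_bij_betw[OF g, of "\<lambda>i. v i \<bullet> (Q *v v i)"] by simp
  finally show ?thesis .
qed

lemma trace_eq_sum_eigenvalues:
  fixes Q :: "real^'n^'n" and v :: "nat \<Rightarrow> real^'n"
  assumes "\<And>i j. i \<in> {1..CARD('n)} \<Longrightarrow> j \<in> {1..CARD('n)} \<Longrightarrow>
      v i \<bullet> v j = (if i = j then 1 else 0)"
    and "\<And>i. i \<in> {1..CARD('n)} \<Longrightarrow> Q *v v i = lam i *\<^sub>R v i"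
  shows "trace Q = (\<Sum>i=1..CARD('n). lam i)"
proof -
  have "trace Q = (\<Sum>i=1..CARD('n). v i \<bullet> (Q *v v i))"
    by (rule trace_eq_sum_orthonormal[OF assms(1)])
  also have "\<dots> = (\<Sum>i=1..CARD('n). lam i)"
    using assms by (intro sum.cong) auto
  finally show ?thesis .
qed

lemma closest_point_orthogonal_comp:
  fixes X :: "'a::euclidean_space set"
  assumes "subspace X"
  shows "closest_point (orthogonal_comp X) x \<in> orthogonal_comp X"
    and "x - closest_point (orthogonal_comp X) x \<in> X"
proof -
  let ?Y = "orthogonal_comp X"
  let ?p = "closest_point ?Y x"
  have Y: "subspace ?Y" "convex ?Y" "closed ?Y"
    by (simp_all add: subspace_orthogonal_comp subspace_imp_convex closed_subspace)
  show p: "?p \<in> ?Y"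
    using Y by (intro closest_point_in_set) (auto dest: subspace_0)
  have "(x - ?p) \<bullet> z \<le> 0" if "z \<in> ?Y" for z
    using closest_point_dot[OF Y(2,3), of "?p + z" x] Y(1) p that by (simp add: subspace_add)
  then have "(x - ?p) \<bullet> z = 0" if "z \<in> ?Y" for z
    using that Y(1) by (metis subspace_neg inner_minus_right neg_le_0_iff_le order_antisym)
  then have "x - ?p \<in> orthogonal_comp ?Y"
    by (auto simp: orthogonal_comp_def orthogonal_def inner_commute)
  then show "x - ?p \<in> X"
    using orthogonal_comp_self[OF assms] by simp
qed

lemma Inf_setcompr_nonneg:
  fixes f :: "'a \<Rightarrow> real"
  assumes "P x" "\<And>y. P y \<Longrightarrow> 0 \<le> f y"
  shows "0 \<le> Inf {f y | y. P y}" and "Inf {f y | y. P y} \<le> f x"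
proof -
  show "0 \<le> Inf {f y | y. P y}"
    using assms by (intro cInf_greatest) auto
  show "Inf {f y | y. P y} \<le> f x"
    using assms by (intro cInf_lower bdd_belowI[of _ 0]) auto
qed

lemma spd_matrix_inv_pos_definite:
  fixes S :: "real^'n^'n"
  assumes "spd S" "x \<noteq> 0"
  shows "0 < x \<bullet> (matrix_inv S *v x)"
proof -
  have pd: "\<And>x. x \<noteq> 0 \<Longrightarrow> 0 < x \<bullet> (S *v x)"
    using assms(1) by (auto simp: spd_def)
  define y where "y = matrix_inv S *v x"
  have x_eq: "x = S *v y"
    using matrix_inv_right[OF pos_definite_invertible[OF pd]]
    by (simp add: y_def matrix_vector_mul_assoc)
  then have "y \<noteq> 0"
    using assms(2) by auto
  moreover have "x \<bullet> (matrix_inv S *v x) = y \<bullet> (S *v y)"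
    by (metis x_eq y_def inner_commute)
  ultimately show ?thesis
    using pd by simp
qed

lemma inv_norm_sq:
  fixes S :: "real^'n^'n"
  assumes "spd S"
  shows "(inv_norm S x)\<^sup>2 = x \<bullet> (matrix_inv S *v x)"
  using spd_matrix_inv_pos_definite[OF assms, of x]
  by (cases "x = 0") (auto simp: inv_norm_def)

lemma inv_norm_nonneg:
  fixes S :: "real^'n^'n"
  assumes "spd S"
  shows "0 \<le> inv_norm S x"
  using spd_matrix_inv_pos_definite[OF assms, of x]
  by (cases "x = 0") (auto simp: inv_norm_def)

lemma inv_norm_pos:
  fixes S :: "real^'n^'n"
  assumes "spd S" "x \<noteq> 0"
  shows "0 < inv_norm S x"
  using spd_matrix_inv_pos_definite[OF assms] by (simp add: inv_norm_def)

lemma inv_norm_scaleR: "inv_norm S (c *\<^sub>R x) = \<bar>c\<bar> * inv_norm S x"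
proof -
  have "(c *\<^sub>R x) \<bullet> (matrix_inv S *v (c *\<^sub>R x)) = c\<^sup>2 * (x \<bullet> (matrix_inv S *v x))"
    by (simp add: matrix_vector_mult_scaleR power2_eq_square)
  then show ?thesis
    by (simp add: inv_norm_def real_sqrt_mult)
qed

lemma norm_le_Sup_mult_inv_norm:
  fixes S :: "real^'n^'n"
  assumes "spd S" "x \<noteq> 0"
  shows "norm x \<le> Sup {norm m / inv_norm S m | m. m \<noteq> 0} * inv_norm S x"
proof -
  obtain \<mu> where \<mu>: "0 < \<mu>" "\<And>x. \<mu> * (norm x)\<^sup>2 \<le> x \<bullet> (matrix_inv S *v x)"
    using pos_definite_quadratic_form_ge spd_matrix_inv_pos_definite[OF assms(1)] by blast
  have "sqrt \<mu> * norm m \<le> inv_norm S m" for m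
    using real_sqrt_le_mono[OF \<mu>(2)[of m]] by (simp add: inv_norm_def real_sqrt_mult)
  then have "norm m / inv_norm S m \<le> 1 / sqrt \<mu>" if "m \<noteq> 0" for m
    using \<mu>(1) that inv_norm_pos[OF assms(1) that] by (simp add: divide_simps mult.commute)
  then have "bdd_above {norm m / inv_norm S m | m. m \<noteq> 0}"
    by (intro bdd_aboveI[of _ "1 / sqrt \<mu>"]) blast
  then have "norm x / inv_norm S x \<le> Sup {norm m / inv_norm S m | m. m \<noteq> 0}"
    using assms(2) by (auto intro: cSup_upper)
  then show ?thesis
    using inv_norm_pos[OF assms] by (simp add: divide_le_eq)
qed

lemma Sup_norm_div_inv_norm_pos:
  fixes S :: "real^'n^'n"
  assumes "spd S"
  shows "0 < Sup {norm m / inv_norm S m | m. m \<noteq> 0}"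
proof -
  obtain x :: "real^'n" where "x \<noteq> 0"
    by (metis axis_eq_0_iff zero_neq_one)
  then show ?thesis
    using norm_le_Sup_mult_inv_norm[OF assms] inv_norm_pos[OF assms]
    by (smt (verit) mult_nonpos_nonneg zero_less_norm_iff)
qed

lemma coercive_solution_linear:
  fixes a :: "'u::real_normed_vector \<Rightarrow> 'u \<Rightarrow> real" and b :: "'m::real_vector \<Rightarrow> 'u \<Rightarrow> real"
  assumes "bilinear a" "coercive_form a" "bilinear b"
    and sol: "\<And>m \<psi>. a (w m) \<psi> = b m \<psi>"
  shows "linear w"
proof -
  have la: "linear (\<lambda>x. a x \<psi>)" and lb: "linear (\<lambda>m. b m \<psi>)" for \<psi>
    using assms(1,3) by (simp_all add: bilinear_def)
  obtain \<alpha> where \<alpha>: "0 < \<alpha>" "\<And>x. \<alpha> * (norm x)\<^sup>2 \<le> a x x"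
    using assms(2) by (auto simp: coercive_form_def)
  have unique: "z = 0" if "\<And>\<psi>. a z \<psi> = 0" for z
    using \<alpha>(2)[of z] that[of z] \<alpha>(1) by (simp add: mult_le_0_iff)
  show ?thesis
  proof (rule linearI)
    fix x y
    have "a (w (x + y) - w x - w y) \<psi> = 0" for \<psi>
      using linear_diff[OF la] linear_add[OF lb] sol by simp
    then have "w (x + y) - w x - w y = 0"
      by (rule unique)
    then show "w (x + y) = w x + w y"
      by (simp add: algebra_simps)
  next
    fix c :: real and x
    have "a (w (c *\<^sub>R x) - c *\<^sub>R w x) \<psi> = 0" for \<psi>
      using linear_diff[OF la] linear_scale[OF la] linear_scale[OF lb] sol by simp
    then have "w (c *\<^sub>R x) - c *\<^sub>R w x = 0"
      by (rule unique)
    then show "w (c *\<^sub>R x) = c *\<^sub>R w x"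
      by simp
  qed
qed

lemma linear_obs:
  assumes "\<And>k. linear (l k)"
  shows "linear (obs l)"
  by (rule linearI) (simp_all add: obs_def vec_eq_iff linear_add[OF assms] linear_scale[OF assms])

lemma eta_inf_mult_norm_le:
  fixes w :: "real^'m \<Rightarrow> 'u::real_normed_vector" and \<Sigma>0 :: "real^'m^'m"
  defines "C \<equiv> Sup {norm m / inv_norm \<Sigma>0 m | m. m \<noteq> 0}"
    and "\<eta> \<equiv> Inf {norm (w m) / inv_norm \<Sigma>0 m | m. m \<in> orthogonal_comp {m. w m = 0} \<and> m \<noteq> 0}"
  assumes \<Sigma>0: "spd \<Sigma>0" and p: "p \<in> orthogonal_comp {m. w m = 0}" and "p \<noteq> 0"
  shows "0 \<le> \<eta>" and "\<eta> * norm p \<le> C * norm (w p)"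
proof -
  have inv_norm_p: "0 < inv_norm \<Sigma>0 p"
    using inv_norm_pos[OF \<Sigma>0 \<open>p \<noteq> 0\<close>] .
  have "0 \<le> norm (w m) / inv_norm \<Sigma>0 m" for m
    using inv_norm_nonneg[OF \<Sigma>0] by simp
  note Inf = Inf_setcompr_nonneg[of "\<lambda>m. m \<in> orthogonal_comp {m. w m = 0} \<and> m \<noteq> 0" p
      "\<lambda>m. norm (w m) / inv_norm \<Sigma>0 m", OF _ this, folded \<eta>_def]
  show \<eta>: "0 \<le> \<eta>"
    using Inf(1) p \<open>p \<noteq> 0\<close> by blast
  have \<eta>_p: "\<eta> * inv_norm \<Sigma>0 p \<le> norm (w p)"
    using Inf(2) p \<open>p \<noteq> 0\<close> inv_norm_p by (simp add: le_divide_eq)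
  have C: "norm p \<le> C * inv_norm \<Sigma>0 p"
    unfolding C_def using norm_le_Sup_mult_inv_norm[OF \<Sigma>0 \<open>p \<noteq> 0\<close>] .
  have "0 \<le> C"
    unfolding C_def using Sup_norm_div_inv_norm_pos[OF \<Sigma>0] by simp
  have "\<eta> * norm p \<le> \<eta> * (C * inv_norm \<Sigma>0 p)"
    using C \<eta> by (rule mult_left_mono)
  also have "\<dots> = C * (\<eta> * inv_norm \<Sigma>0 p)"
    by simp
  also have "\<dots> \<le> C * norm (w p)"
    using \<eta>_p \<open>0 \<le> C\<close> by (rule mult_left_mono)
  finally show "\<eta> * norm p \<le> C * norm (w p)" .
qed

lemma observability_coefficient_mult_norm_le:
  fixes w :: "'m::real_vector \<Rightarrow> 'u::real_normed_vector" and L :: "'u \<Rightarrow> real^'k"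
    and S :: "real^'k^'k"
  defines "\<beta> \<equiv> Inf {inv_norm S (L (w m)) | m. norm (w m) = 1}"
  assumes w: "linear w" and L: "linear L" and S: "spd S" and "w x \<noteq> 0"
  shows "0 \<le> \<beta>" and "\<beta> * norm (w x) \<le> inv_norm S (L (w x))"
proof -
  let ?c = "norm (w x)"
  have c: "0 < ?c"
    using \<open>w x \<noteq> 0\<close> by simp
  have unit: "norm (w ((1 / ?c) *\<^sub>R x)) = 1"
    using c by (simp add: linear_scale[OF w])
  note Inf = Inf_setcompr_nonneg[of "\<lambda>m. norm (w m) = 1", OF unit inv_norm_nonneg[OF S],
      of "\<lambda>m. L (w m)", folded \<beta>_def]
  show "0 \<le> \<beta>"
    by (rule Inf(1))
  have "inv_norm S (L (w ((1 / ?c) *\<^sub>R x))) = inv_norm S (L (w x)) / ?c"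
    using c by (simp add: linear_scale[OF w] linear_scale[OF L] inv_norm_scaleR)
  then show "\<beta> * ?c \<le> inv_norm S (L (w x))"
    using Inf(2) c by (simp add: le_divide_eq)
qed

lemma observability_projection_bound:
  fixes w :: "real^'m \<Rightarrow> 'u::real_normed_vector" and L :: "'u \<Rightarrow> real^'k"
    and \<Sigma>0 :: "real^'m^'m" and \<Sigma>L :: "real^'k^'k"
  defines "C \<equiv> Sup {norm m / inv_norm \<Sigma>0 m | m. m \<noteq> 0}"
    and "\<eta> \<equiv> Inf {norm (w m) / inv_norm \<Sigma>0 m | m. m \<in> orthogonal_comp {m. w m = 0} \<and> m \<noteq> 0}"
    and "\<beta> \<equiv> Inf {inv_norm \<Sigma>L (L (w m)) | m. norm (w m) = 1}"
  assumes w: "linear w" and L: "linear L" and \<Sigma>0: "spd \<Sigma>0" and \<Sigma>L: "spd \<Sigma>L"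
  shows "\<beta>\<^sup>2 * \<eta>\<^sup>2 * (norm (closest_point (orthogonal_comp {m. w m = 0}) x))\<^sup>2
    \<le> C\<^sup>2 * (inv_norm \<Sigma>L (L (w x)))\<^sup>2"
proof -
  let ?X = "{m. w m = 0}"
  let ?p = "closest_point (orthogonal_comp ?X) x"
  have "subspace ?X"
    using w by (rule linear_subspace_kernel)
  then have p: "?p \<in> orthogonal_comp ?X" and "x - ?p \<in> ?X"
    by (rule closest_point_orthogonal_comp)+
  then have w_p: "w ?p = w x"
    by (simp add: linear_diff[OF w])
  (* eta and beta are infima of possibly empty sets, so their signs are only known outside the
     degenerate cases, where the left-hand side vanishes instead *)
  show ?thesis
  proof (cases "?p = 0 \<or> w x = 0")
    case True
    moreover have "?p \<noteq> 0 \<Longrightarrow> \<eta> * norm ?p \<le> C * norm (w x)" "?p \<noteq> 0 \<Longrightarrow> 0 \<le> \<eta>"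
      using eta_inf_mult_norm_le[OF \<Sigma>0 p] w_p unfolding C_def \<eta>_def by auto
    ultimately have "?p = 0 \<or> \<eta> = 0"
      by (force simp: mult_le_0_iff)
    then show ?thesis
      by auto
  next
    case False
    note \<eta> = eta_inf_mult_norm_le[OF \<Sigma>0 p, folded C_def \<eta>_def]
    note \<beta> = observability_coefficient_mult_norm_le[OF w L \<Sigma>L, of x, folded \<beta>_def]
    have "\<beta> * (\<eta> * norm ?p) \<le> \<beta> * (C * norm (w x))"
      using \<eta> False \<beta>(1) w_p by (intro mult_left_mono) auto
    also have "\<dots> = C * (\<beta> * norm (w x))"
      by simp
    also have "\<dots> \<le> C * inv_norm \<Sigma>L (L (w x))"
      using \<beta> False Sup_norm_div_inv_norm_pos[OF \<Sigma>0] unfolding C_def by (intro mult_left_mono) auto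
    finally have "(\<beta> * \<eta> * norm ?p)\<^sup>2 \<le> (C * inv_norm \<Sigma>L (L (w x)))\<^sup>2"
      using \<eta> \<beta> False by (intro power_mono) (auto simp: mult.assoc)
    then show ?thesis
      by (simp add: power_mult_distrib)
  qed
qed

lemma precision_quadratic_form:
  fixes G :: "real^'m^'k" and \<Sigma>0 :: "real^'m^'m" and \<Sigma>L :: "real^'k^'k"
  assumes "spd \<Sigma>0" "spd \<Sigma>L"
  shows "m \<bullet> ((c *\<^sub>R (transpose G ** matrix_inv \<Sigma>L ** G) + matrix_inv \<Sigma>0) *v m)
    = c * (inv_norm \<Sigma>L (G *v m))\<^sup>2 + (inv_norm \<Sigma>0 m)\<^sup>2"
proof -
  have "(transpose G ** matrix_inv \<Sigma>L ** G) *v m = transpose G *v (matrix_inv \<Sigma>L *v (G *v m))"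
    by (simp add: matrix_vector_mul_assoc matrix_mul_assoc)
  moreover have "m \<bullet> (transpose G *v y) = (G *v m) \<bullet> y" for y
    by (metis dot_lmul_matrix inner_commute vector_transpose_matrix transpose_transpose)
  ultimately have "m \<bullet> ((transpose G ** matrix_inv \<Sigma>L ** G) *v m)
      = (G *v m) \<bullet> (matrix_inv \<Sigma>L *v (G *v m))"
    by simp
  then show ?thesis
    using assms by (simp add: inv_norm_sq matrix_vector_mult_add_rdistrib inner_add_right
        flip: scaleR_matrix_vector_assoc)
qed

lemma posterior_eigenvalue_le:
  fixes G :: "real^'m^'k" and \<Sigma>0 :: "real^'m^'m" and \<Sigma>L :: "real^'k^'k"
  assumes \<Sigma>0: "spd \<Sigma>0" and \<Sigma>L: "spd \<Sigma>L"
    and eigen: "matrix_inv ((1 / \<sigma>\<^sup>2) *\<^sub>R (transpose G ** matrix_inv \<Sigma>L ** G) + matrix_inv \<Sigma>0) *v v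
      = c *\<^sub>R v"
    and unit: "v \<bullet> v = 1"
    and C: "norm v \<le> C * inv_norm \<Sigma>0 v"
    and D: "0 \<le> D" "D \<le> (1 / \<sigma>\<^sup>2) * (C\<^sup>2 * (inv_norm \<Sigma>L (G *v v))\<^sup>2)"
  shows "c \<le> C\<^sup>2 / (D + 1)"
proof -
  let ?A = "(1 / \<sigma>\<^sup>2) *\<^sub>R (transpose G ** matrix_inv \<Sigma>L ** G) + matrix_inv \<Sigma>0"
  let ?q = "(inv_norm \<Sigma>L (G *v v))\<^sup>2" and ?r = "(inv_norm \<Sigma>0 v)\<^sup>2"
  note quadratic_form = precision_quadratic_form[OF \<Sigma>0 \<Sigma>L, of _ "1 / \<sigma>\<^sup>2" G]
  have "0 < x \<bullet> (?A *v x)" if "x \<noteq> 0" for x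
    unfolding quadratic_form using inv_norm_pos[OF \<Sigma>0 that] by (intro add_nonneg_pos) auto
  then have c: "c * ((1 / \<sigma>\<^sup>2) * ?q + ?r) = 1"
    using inverse_eigenpair_quadratic_form[OF pos_definite_invertible eigen unit] quadratic_form
    by simp
  moreover have "0 \<le> (1 / \<sigma>\<^sup>2) * ?q + ?r"
    by simp
  ultimately have "0 < c"
    by (metis zero_less_mult_iff zero_less_one not_less)
  have "norm v = 1"
    using unit by (simp add: norm_eq_1)
  then have "1 \<le> C * inv_norm \<Sigma>0 v"
    using C by simp
  then have "1 \<le> C\<^sup>2 * ?r"
    by (smt (verit) one_le_power power_mult_distrib)
  then have "c * (D + 1) \<le> c * ((1 / \<sigma>\<^sup>2) * (C\<^sup>2 * ?q) + C\<^sup>2 * ?r)"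
    using D(2) \<open>0 < c\<close> by (intro mult_left_mono) auto
  also have "\<dots> = C\<^sup>2 * (c * ((1 / \<sigma>\<^sup>2) * ?q + ?r))"
    by (simp add: algebra_simps)
  finally show ?thesis
    using c D(1) by (simp add: le_divide_eq)
qed

lemma posterior_eigenvalue_observability_bound:
  fixes w :: "real^'m \<Rightarrow> 'u::real_normed_vector" and L :: "'u \<Rightarrow> real^'k"
    and \<Sigma>0 :: "real^'m^'m" and \<Sigma>L :: "real^'k^'k"
  defines "G \<equiv> matrix (\<lambda>m. L (w m))"
    and "C \<equiv> Sup {norm m / inv_norm \<Sigma>0 m | m. m \<noteq> 0}"
    and "\<eta> \<equiv> Inf {norm (w m) / inv_norm \<Sigma>0 m | m. m \<in> orthogonal_comp {m. w m = 0} \<and> m \<noteq> 0}"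
    and "\<beta> \<equiv> Inf {inv_norm \<Sigma>L (L (w m)) | m. norm (w m) = 1}"
  assumes w: "linear w" and L: "linear L" and \<Sigma>0: "spd \<Sigma>0" and \<Sigma>L: "spd \<Sigma>L"
    and eigen: "matrix_inv ((1 / \<sigma>\<^sup>2) *\<^sub>R (transpose G ** matrix_inv \<Sigma>L ** G) + matrix_inv \<Sigma>0) *v v
      = c *\<^sub>R v"
    and unit: "v \<bullet> v = 1"
  shows "c \<le> C\<^sup>2 / ((1 / \<sigma>\<^sup>2) * \<beta>\<^sup>2 * \<eta>\<^sup>2 * (norm (closest_point (orthogonal_comp {m. w m = 0}) v))\<^sup>2 + 1)"
proof (rule posterior_eigenvalue_le[OF \<Sigma>0 \<Sigma>L eigen unit])
  have "linear (\<lambda>m. L (w m))"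
    using linear_compose[OF w L] by (simp add: o_def)
  then have G_apply: "G *v m = L (w m)" for m
    unfolding G_def by (simp add: matrix_works linear_matrix_vector_mul_eq)
  have "v \<noteq> 0"
    using unit by auto
  then show "norm v \<le> C * inv_norm \<Sigma>0 v"
    unfolding C_def by (rule norm_le_Sup_mult_inv_norm[OF \<Sigma>0])
  have "\<beta>\<^sup>2 * \<eta>\<^sup>2 * (norm (closest_point (orthogonal_comp {m. w m = 0}) v))\<^sup>2
      \<le> C\<^sup>2 * (inv_norm \<Sigma>L (G *v v))\<^sup>2"
    unfolding G_apply C_def \<eta>_def \<beta>_def by (rule observability_projection_bound[OF w L \<Sigma>0 \<Sigma>L])
  then show "(1 / \<sigma>\<^sup>2) * \<beta>\<^sup>2 * \<eta>\<^sup>2 * (norm (closest_point (orthogonal_comp {m. w m = 0}) v))\<^sup>2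
      \<le> (1 / \<sigma>\<^sup>2) * (C\<^sup>2 * (inv_norm \<Sigma>L (G *v v))\<^sup>2)"
    by (simp add: mult.assoc divide_right_mono)
qed simp

theorem mainTheorem1:
  fixes P :: "(real^'p) set"
    and a :: "real^'p \<Rightarrow> 'u::{real_inner,complete_space} \<Rightarrow> 'u \<Rightarrow> real"
    and b :: "real^'p \<Rightarrow> real^'m::finite \<Rightarrow> 'u \<Rightarrow> real"
    and u :: "real^'p \<Rightarrow> real^'m \<Rightarrow> 'u"
    and \<Sigma>0 :: "real^'m^'m"
    and l :: "'k::finite \<Rightarrow> 'u \<Rightarrow> real"
    and \<Sigma>L :: "real^'k^'k"
    and \<sigma> :: real
    and \<theta> :: "real^'p"
    and lam :: "nat \<Rightarrow> real"
    and mv :: "nat \<Rightarrow> real^'m"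
  assumes P_compact: "compact P"
    and a_bd: "\<And>t. t \<in> P \<Longrightarrow> bounded_bilinear_form (a t)"
    and a_coer: "\<And>t. t \<in> P \<Longrightarrow> coercive_form (a t)"
    and b_bd: "\<And>t. t \<in> P \<Longrightarrow> bounded_bilinear_form (b t)"
    and b_nontriv: "\<And>t. t \<in> P \<Longrightarrow> \<exists>m \<psi>. b t m \<psi> \<noteq> 0"
    and u_sol: "\<And>t m \<psi>. t \<in> P \<Longrightarrow> a t (u t m) \<psi> = b t m \<psi>"
    and \<Sigma>0_spd: "spd \<Sigma>0"
    and l_bd: "\<And>k. bounded_linear (l k)"
    and \<Sigma>L_spd: "spd \<Sigma>L"
    and \<sigma>_pos: "\<sigma> > 0"
    and \<theta>P: "\<theta> \<in> P"
    and lam_pos: "\<And>i. i \<in> {1..CARD('m)} \<Longrightarrow> 0 < lam i"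
    and lam_sorted: "\<And>i j. i \<in> {1..CARD('m)} \<Longrightarrow> j \<in> {1..CARD('m)} \<Longrightarrow> i \<le> j \<Longrightarrow> lam i \<le> lam j"
    and mv_orthonormal: "\<And>i j. i \<in> {1..CARD('m)} \<Longrightarrow> j \<in> {1..CARD('m)} \<Longrightarrow>
         mv i \<bullet> mv j = (if i = j then 1 else 0)"
    and mv_eigen: "\<And>i. i \<in> {1..CARD('m)} \<Longrightarrow>
         matrix_inv ((1 / \<sigma>\<^sup>2) *\<^sub>R (transpose (matrix (\<lambda>m. obs l (u \<theta> m))) ** matrix_inv \<Sigma>L
             ** matrix (\<lambda>m. obs l (u \<theta> m))) + matrix_inv \<Sigma>0) *v mv i = lam i *\<^sub>R mv i"
  shows "(let G = matrix (\<lambda>m. obs l (u \<theta> m));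
              \<Sigma>post = matrix_inv ((1 / \<sigma>\<^sup>2) *\<^sub>R (transpose G ** matrix_inv \<Sigma>L ** G) + matrix_inv \<Sigma>0);
              C = Sup {norm m / inv_norm \<Sigma>0 m | m. m \<noteq> 0};
              X = {m. u \<theta> m = 0};
              \<eta>inf = Inf {norm (u \<theta> m) / inv_norm \<Sigma>0 m | m. m \<in> orthogonal_comp X \<and> m \<noteq> 0};
              \<beta> = Inf {inv_norm \<Sigma>L (obs l (u \<theta> m)) | m. norm (u \<theta> m) = 1};
              Proj = closest_point (orthogonal_comp X)
          in (\<forall>i\<in>{1..CARD('m)}.
                lam i \<le> C\<^sup>2 / ((1 / \<sigma>\<^sup>2) * \<beta>\<^sup>2 * \<eta>inf\<^sup>2 * (norm (Proj (mv i)))\<^sup>2 + 1))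
             \<and> trace \<Sigma>post \<le> C\<^sup>2 * (\<Sum>i=1..CARD('m).
                  1 / ((1 / \<sigma>\<^sup>2) * \<beta>\<^sup>2 * \<eta>inf\<^sup>2 * (norm (Proj (mv i)))\<^sup>2 + 1)))"
proof -
  have u_linear: "linear (u \<theta>)"
    using a_bd[OF \<theta>P] a_coer[OF \<theta>P] b_bd[OF \<theta>P] u_sol[OF \<theta>P]
    by (intro coercive_solution_linear[of "a \<theta>" "b \<theta>"]) (auto simp: bounded_bilinear_form_def)
  have obs_linear: "linear (obs l)"
    using l_bd by (intro linear_obs bounded_linear.linear)
  have unit: "mv i \<bullet> mv i = 1" if "i \<in> {1..CARD('m)}" for i
    using mv_orthonormal[OF that that] by simp
  note eigenvalue_le = posterior_eigenvalue_observability_bound[OF u_linear obs_linear \<Sigma>0_spd \<Sigma>L_spd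
      mv_eigen unit]
  let ?G = "matrix (\<lambda>m. obs l (u \<theta> m))"
  have trace: "trace (matrix_inv ((1 / \<sigma>\<^sup>2) *\<^sub>R (transpose ?G ** matrix_inv \<Sigma>L ** ?G) + matrix_inv \<Sigma>0))
      = (\<Sum>i=1..CARD('m). lam i)"
    by (rule trace_eq_sum_eigenvalues[OF mv_orthonormal mv_eigen])
  show ?thesis
    unfolding Let_def trace sum_distrib_left
    using eigenvalue_le by (auto intro!: sum_mono)
qed

end
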